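(* Let $L$, $\rho$ and the notions below be as in the context, let $\lambda_9\in\Lambda$ be a vector of norm $9$, and let $s=(\lambda_9;\theta,-1)$. Let $p$ be the point of $s^\perp$ nearest $\rho$, and let $B=\{x\in\mathbb{C}H^{13}:\mathrm{ht}_\rho(x)<\mathrm{ht}_\rho(p)\}$ be the open horoball centered at $\rho$ whose bounding horosphere is tangent to $s^\perp$ at $p$. Then there exist an open ball $U$ around $p$ with $U\cap\mathcal{H}=U\cap\mathcal{H}_p$, and a triflection $R$ in a Leech root, such that $B\cap R(B)\cap U\neq\emptyset$ and $R(B)\cap U\cap s^\perp\neq\emptyset$.
   Context: Let $\omega$ be a primitive cube root of unity, $\mathcal{E}=\mathbb{Z}[\omega]$, $\theta=\omega-\bar\omega=\sqrt{-3}$. Hermitian forms are linear in the first argument and antilinear in the second; $v^2=\langle v,v\rangle$. $\Lambda$ is the complex Leech lattice, an $\mathcal{E}$-lattice of rank 12 whose underlying real lattice is a scaled Leech lattice, scaled to have minimal norm $6$ (all inner products in $\theta\mathcal{E}$, $\Lambda=\theta\Lambda^*$). $L=\Lambda\oplus\mathcal{E}^2$, vectors $(x;y,z)$ with $x\in\Lambda$, $y,z\in\mathcal{E}$, and $\langle(x;y,z),(x';y',z')\rangle=\langle x,x'\rangle_\Lambda+\bar\theta y\bar z'+\theta z\bar y'$; signature $(13,1)$; $\mathbb{C}H^{13}$ is the set of negative-definite lines in $L\otimes_{\mathcal{E}}\mathbb{C}$ with its complex hyperbolic metric. A root is a vector of $L$ of norm $3$; $s^\perp$ is the corresponding hyperplane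 in $\mathbb{C}H^{13}$; $\mathcal{H}$ is the union of all such hyperplanes and $\mathcal{H}_p$ the union of those containing $p$. $\rho=(0;0,1)$. For $x\in\mathbb{C}H^{13}$ represented by $w$, $\mathrm{ht}_\rho(x)=-|\langle \rho,w\rangle|^2/w^2$. A Leech root is a root $l$ with $|\langle\rho,l\rangle|^2=3$. A triflection in a root $l$ is a map $x\mapsto x-(1-\zeta)\frac{\langle x,l\rangle}{3}l$ with $\zeta\in\{\omega,\bar\omega\}$. The point of $s^\perp$ nearest $\rho$ is the point represented by $\rho-\tfrac13\langle\rho,s\rangle s$ (the point of $s^\perp$ minimizing $\mathrm{ht}_\rho$). *)

theory Defs
  imports "HOL-Analysis.Analysis"
begin

definition omega :: complex where
  "omega = Complex (-1/2) (sqrt 3 / 2)"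

definition theta :: complex where
  "theta = omega - cnj omega"

definition Eis :: "complex set" where
  "Eis = {of_int a + of_int b * omega | a b. True}"

type_synonym cvec12 = "complex ^ 12"

definition hf12 :: "cvec12 \<Rightarrow> cvec12 \<Rightarrow> complex" where
  "hf12 x y = (\<Sum>i\<in>UNIV. x $ i * cnj (y $ i))"

definition E_lattice12 :: "cvec12 set \<Rightarrow> bool" where
  "E_lattice12 M \<longleftrightarrow> (\<exists>b :: 12 \<Rightarrow> cvec12.
      (\<forall>c :: 12 \<Rightarrow> complex. (\<Sum>i\<in>UNIV. c i *s b i) = 0 \<longrightarrow> (\<forall>i. c i = 0)) \<and>
      M = {(\<Sum>i\<in>UNIV. c i *s b i) | c. \<forall>i. c i \<in> Eis})"

definition dual12 :: "cvec12 set \<Rightarrow> cvec12 set" where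
  "dual12 M = {y. \<forall>x\<in>M. hf12 x y \<in> Eis}"

definition complex_leech :: "cvec12 set \<Rightarrow> bool" where
  "complex_leech M \<longleftrightarrow>
     E_lattice12 M \<and>
     (\<forall>x\<in>M. \<forall>y\<in>M. hf12 x y \<in> {theta * e | e. e \<in> Eis}) \<and>
     M = {theta *s y | y. y \<in> dual12 M} \<and>
     (\<forall>x\<in>M. x \<noteq> 0 \<longrightarrow> Re (hf12 x x) \<ge> 6) \<and>
     (\<exists>x\<in>M. hf12 x x = 6)"

section \<open>L = Lambda + E^2 and its Hermitian form of signature (13,1)\<close>

type_synonym vec = "cvec12 \<times> complex \<times> complex"

fun hform :: "vec \<Rightarrow> vec \<Rightarrow> complex" where
  "hform (x, y, z) (x', y', z') = hf12 x x' + cnj theta * y * cnj z' + theta * z * cnj y'"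

fun vscale :: "complex \<Rightarrow> vec \<Rightarrow> vec" where
  "vscale c (x, y, z) = (c *s x, c * y, c * z)"

fun vsub :: "vec \<Rightarrow> vec \<Rightarrow> vec" where
  "vsub (x, y, z) (x', y', z') = (x - x', y - y', z - z')"

definition Lat :: "cvec12 set \<Rightarrow> vec set" where
  "Lat M = {(x, y, z) | x y z. x \<in> M \<and> y \<in> Eis \<and> z \<in> Eis}"

definition rho :: vec where
  "rho = (0, 0, 1)"

text \<open>Points of complex hyperbolic space CH^13 are represented by negative-norm vectors;
  all point sets below are invariant under nonzero complex scaling.\<close>
definition negv :: "vec \<Rightarrow> bool" where
  "negv w \<longleftrightarrow> Re (hform w w) < 0"

definition roots :: "cvec12 set \<Rightarrow> vec set" where
  "roots M = {r \<in> Lat M. hform r r = 3}"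

definition mirror :: "vec \<Rightarrow> vec set" where
  "mirror s = {w. negv w \<and> hform w s = 0}"

definition Hall :: "cvec12 set \<Rightarrow> vec set" where
  "Hall M = (\<Union>r\<in>roots M. mirror r)"

definition Hat :: "cvec12 set \<Rightarrow> vec \<Rightarrow> vec set" where
  "Hat M p = (\<Union>r\<in>{r \<in> roots M. p \<in> mirror r}. mirror r)"

definition ht :: "vec \<Rightarrow> real" where
  "ht w = - (cmod (hform rho w))\<^sup>2 / Re (hform w w)"

text \<open>Complex hyperbolic distance (curvature normalised to -1).\<close>
definition chdist :: "vec \<Rightarrow> vec \<Rightarrow> real" where
  "chdist v w = 2 * arcosh (sqrt ((cmod (hform v w))\<^sup>2 / (Re (hform v v) * Re (hform w w))))"

definition chball :: "vec \<Rightarrow> real \<Rightarrow> vec set" where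
  "chball p r = {w. negv w \<and> chdist w p < r}"

definition leech_root :: "cvec12 set \<Rightarrow> vec \<Rightarrow> bool" where
  "leech_root M l \<longleftrightarrow> l \<in> roots M \<and> (cmod (hform rho l))\<^sup>2 = 3"

definition triflection :: "complex \<Rightarrow> vec \<Rightarrow> vec \<Rightarrow> vec" where
  "triflection \<zeta> l x = vsub x (vscale ((1 - \<zeta>) * hform x l / 3) l)"

end

theory Submission
  imports Defs
begin

text \<open>The point \<open>p\<close> is the lattice vector \<open>(-\<lambda>\<^sub>9; -\<theta>, 2)\<close> of norm \<open>-3\<close>. For a root \<open>r\<close>
  and a point \<open>w\<close> of \<open>r\<^sup>\<perp>\<close>, the form is positive semidefinite on \<open>w\<^sup>\<perp>\<close>; applying the
  Cauchy--Schwarz inequality there to \<open>r\<close> and the projection of \<open>p\<close> gives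
  \<open>cosh\<^sup>2 (d(w,p)/2) \<ge> 1 + |\<langle>p,r\<rangle>|\<^sup>2/9\<close>. Inner products of lattice vectors lie in \<open>\<theta>\<E>\<close>,
  so either \<open>p \<in> r\<^sup>\<perp>\<close> or \<open>|\<langle>p,r\<rangle>|\<^sup>2 \<ge> 3\<close>; hence the ball of radius \<open>2 arcosh \<surd>(4/3)\<close>
  about \<open>p\<close> meets only mirrors through \<open>p\<close>. The two remaining claims are witnessed by the
  triflection with \<open>\<zeta> = \<omega>\<close> in the Leech root \<open>(0; -1, \<omega>)\<close> and two explicit points.\<close>

lemma theta_eq: "theta = Complex 0 (sqrt 3)"
  by (simp add: theta_def omega_def complex_eq_iff)

lemma cnj_theta: "cnj theta = - theta"
  by (simp add: theta_eq complex_eq_iff)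

lemma theta_mult_cnj: "theta * cnj theta = 3"
  by (simp add: theta_eq complex_eq_iff)

lemma theta_eq_omega: "theta = 2 * omega + 1"
  by (simp add: theta_eq omega_def complex_eq_iff)

lemma cmod_theta_sq: "(cmod theta)\<^sup>2 = 3"
  by (simp add: theta_eq cmod_def)

lemma Eis_iff: "z \<in> Eis \<longleftrightarrow> (\<exists>a b::int. z = of_int a + of_int b * omega)"
  by (auto simp: Eis_def)

lemma Eis_of_int [simp]: "of_int k \<in> Eis"
  unfolding Eis_iff by (rule exI[of _ k], rule exI[of _ 0]) simp

lemma Eis_0 [simp]: "0 \<in> Eis" and Eis_1 [simp]: "1 \<in> Eis" and Eis_numeral [simp]: "numeral n \<in> Eis"
  using Eis_of_int[of 0] Eis_of_int[of 1] Eis_of_int[of "numeral n"] by simp_all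

lemma Eis_omega [simp]: "omega \<in> Eis"
  unfolding Eis_iff by (rule exI[of _ 0], rule exI[of _ 1]) simp

lemma Eis_add: "x \<in> Eis \<Longrightarrow> y \<in> Eis \<Longrightarrow> x + y \<in> Eis"
proof -
  assume "x \<in> Eis" "y \<in> Eis"
  then obtain a b c d :: int where "x = of_int a + of_int b * omega" "y = of_int c + of_int d * omega"
    unfolding Eis_iff by blast
  then have "x + y = of_int (a + c) + of_int (b + d) * omega"
    by (simp add: algebra_simps)
  then show ?thesis unfolding Eis_iff by blast
qed

lemma Eis_minus: "x \<in> Eis \<Longrightarrow> - x \<in> Eis"
proof -
  assume "x \<in> Eis"
  then obtain a b :: int where "x = of_int a + of_int b * omega" unfolding Eis_iff by blast
  then have "- x = of_int (- a) + of_int (- b) * omega" by simp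
  then show ?thesis unfolding Eis_iff by blast
qed

lemma Eis_mult: "x \<in> Eis \<Longrightarrow> y \<in> Eis \<Longrightarrow> x * y \<in> Eis"
proof -
  assume "x \<in> Eis" "y \<in> Eis"
  then obtain a b c d :: int where x: "x = of_int a + of_int b * omega"
    and y: "y = of_int c + of_int d * omega"
    unfolding Eis_iff by blast
  have "x * y = of_int (a*c - b*d) + of_int (a*d + b*c - b*d) * omega"
    unfolding x y by (simp add: omega_def complex_eq_iff algebra_simps)
  then show ?thesis unfolding Eis_iff by blast
qed

lemma Eis_cnj: "x \<in> Eis \<Longrightarrow> cnj x \<in> Eis"
proof -
  assume "x \<in> Eis"
  then obtain a b :: int where "x = of_int a + of_int b * omega" unfolding Eis_iff by blast
  then have "cnj x = of_int (a - b) + of_int (- b) * omega"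
    by (simp add: omega_def complex_eq_iff)
  then show ?thesis unfolding Eis_iff by blast
qed

lemma Eis_theta [simp]: "theta \<in> Eis"
  unfolding theta_eq_omega by (intro Eis_add Eis_mult) simp_all

lemma Eis_norm_ge_1:
  assumes "z \<in> Eis" "z \<noteq> 0"
  shows "1 \<le> (cmod z)\<^sup>2"
proof -
  obtain a b :: int where z: "z = of_int a + of_int b * omega"
    using assms(1) unfolding Eis_iff by blast
  have "(cmod z)\<^sup>2 = (real_of_int a - real_of_int b / 2)\<^sup>2 + (real_of_int b * sqrt 3 / 2)\<^sup>2"
    unfolding z cmod_power2 by (simp add: omega_def)
  also have "\<dots> = of_int (a\<^sup>2 - a * b + b\<^sup>2)"
    by (simp add: power2_eq_square algebra_simps)
  finally have norm: "(cmod z)\<^sup>2 = of_int (a\<^sup>2 - a * b + b\<^sup>2)" .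
  have "a \<noteq> 0 \<or> b \<noteq> 0" using assms(2) z by auto
  then have "0 < (2 * a - b)\<^sup>2 + 3 * b\<^sup>2"
    by (cases "b = 0") (simp_all add: add_nonneg_pos)
  moreover have "(2 * a - b)\<^sup>2 + 3 * b\<^sup>2 = 4 * (a\<^sup>2 - a * b + b\<^sup>2)"
    by (simp add: power2_eq_square algebra_simps)
  ultimately have "0 < a\<^sup>2 - a * b + b\<^sup>2" by simp
  then show ?thesis unfolding norm by linarith
qed

lemma theta_Eis_norm_ge_3:
  assumes "z \<in> {theta * e | e. e \<in> Eis}" "z \<noteq> 0"
  shows "3 \<le> (cmod z)\<^sup>2"
proof -
  obtain e where e: "e \<in> Eis" and z: "z = theta * e" using assms(1) by blast
  have "1 \<le> (cmod e)\<^sup>2" using Eis_norm_ge_1[OF e] assms(2) z by simp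
  then show ?thesis unfolding z by (simp add: norm_mult power_mult_distrib cmod_theta_sq)
qed

lemma hf12_scale_left: "hf12 (c *s x) y = c * hf12 x y"
  unfolding hf12_def by (simp add: sum_distrib_left mult.assoc)

lemma hf12_scale_right: "hf12 x (c *s y) = cnj c * hf12 x y"
  unfolding hf12_def by (simp add: sum_distrib_left algebra_simps)

lemma hf12_diff_left: "hf12 (x - y) z = hf12 x z - hf12 y z"
  unfolding hf12_def by (simp add: sum_subtractf algebra_simps)

lemma hf12_diff_right: "hf12 x (y - z) = hf12 x y - hf12 x z"
  unfolding hf12_def by (simp add: sum_subtractf algebra_simps)

lemma hf12_minus_left: "hf12 (- x) y = - hf12 x y"
  and hf12_minus_right: "hf12 x (- y) = - hf12 x y"
  unfolding hf12_def by (simp_all add: sum_negf)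

lemma hf12_zero_left: "hf12 0 y = 0" and hf12_zero_right: "hf12 x 0 = 0"
  unfolding hf12_def by simp_all

lemmas hf12_simps = hf12_scale_left hf12_scale_right hf12_diff_left hf12_diff_right
  hf12_minus_left hf12_minus_right hf12_zero_left hf12_zero_right

lemma hf12_cnj: "hf12 y x = cnj (hf12 x y)"
  unfolding hf12_def by (simp add: mult.commute)

lemma hf12_self_nonneg: "0 \<le> Re (hf12 x x)"
  unfolding hf12_def by (simp add: sum_nonneg)

lemma hform_cnj: "hform v u = cnj (hform u v)"
proof -
  obtain x y z x' y' z' where "u = (x, y, z)" "v = (x', y', z')"
    by (cases u; cases v)
  then show ?thesis by (simp add: hf12_cnj[of x] cnj_theta algebra_simps)
qed

lemma hform_sub_left: "hform (vsub u v) w = hform u w - hform v w"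
  and hform_sub_right: "hform w (vsub u v) = hform w u - hform w v"
  and hform_scale_left: "hform (vscale c u) w = c * hform u w"
  and hform_scale_right: "hform w (vscale c u) = cnj c * hform w u"
  by (cases u; cases v; cases w; simp add: hf12_simps algebra_simps)+

lemmas hform_lin = hform_sub_left hform_sub_right hform_scale_left hform_scale_right

lemma hform_self_real: "hform u u = of_real (Re (hform u u))"
  by (metis hform_cnj Reals_cnj_iff complex_is_Real_iff of_real_Re)

text \<open>\<open>Re (hform v v) = |x|\<^sup>2 + |\<theta>\<^sup>* y + z|\<^sup>2/2 - |neg_coord v|\<^sup>2/2\<close> for \<open>v = (x, y, z)\<close>,
  so the form is positive semidefinite on the kernel of \<open>neg_coord\<close>.\<close>

fun neg_coord :: "vec \<Rightarrow> complex" where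
  "neg_coord (x, y, z) = cnj theta * y - z"

lemma neg_coord_combination:
  "neg_coord (vsub (vscale a u) (vscale b w)) = a * neg_coord u - b * neg_coord w"
  by (cases u; cases w) (simp add: algebra_simps)

lemma hform_self_nonneg_if_neg_coord_zero:
  assumes "neg_coord v = 0"
  shows "0 \<le> Re (hform v v)"
proof -
  obtain x y where v: "v = (x, y, cnj theta * y)"
    using assms by (cases v) simp
  have "hform v v = hf12 x x + 6 * (y * cnj y)"
    unfolding v by (simp add: cnj_theta theta_eq complex_eq_iff algebra_simps)
  then show ?thesis by (simp add: hf12_self_nonneg)
qed

lemma Re_mult_cnj_self: "Re (a * cnj a * z) = (cmod a)\<^sup>2 * Re z"
  unfolding cmod_power2 by (simp add: power2_eq_square algebra_simps)

lemma hform_nonneg_orthogonal_negative: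
  assumes neg: "negv w" and orth: "hform u w = 0"
  shows "0 \<le> Re (hform u u)"
proof (rule ccontr)
  assume "\<not> 0 \<le> Re (hform u u)"
  then have u_neg: "Re (hform u u) < 0" by simp
  have w_neg: "Re (hform w w) < 0" using neg by (simp add: negv_def)
  have "neg_coord w \<noteq> 0"
    using w_neg hform_self_nonneg_if_neg_coord_zero[of w] by auto
  define v where "v = vsub (vscale (neg_coord w) u) (vscale (neg_coord u) w)"
  have "neg_coord v = 0" unfolding v_def neg_coord_combination by simp
  then have v_nonneg: "0 \<le> Re (hform v v)" by (rule hform_self_nonneg_if_neg_coord_zero)
  have "hform w u = 0" using hform_cnj[of w u] orth by simp
  then have "hform v v = neg_coord w * cnj (neg_coord w) * hform u u
                        + neg_coord u * cnj (neg_coord u) * hform w w"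
    unfolding v_def hform_lin orth by (simp add: algebra_simps)
  then have "Re (hform v v) = (cmod (neg_coord w))\<^sup>2 * Re (hform u u)
                            + (cmod (neg_coord u))\<^sup>2 * Re (hform w w)"
    by (simp only: Re_mult_cnj_self plus_complex.sel)
  moreover have "(cmod (neg_coord w))\<^sup>2 * Re (hform u u) < 0"
    using \<open>neg_coord w \<noteq> 0\<close> u_neg by (simp add: mult_pos_neg)
  moreover have "(cmod (neg_coord u))\<^sup>2 * Re (hform w w) \<le> 0"
    using w_neg by (simp add: mult_nonneg_nonpos)
  ultimately show False using v_nonneg by linarith
qed

lemma hform_cauchy_schwarz_orthogonal_negative:
  assumes neg: "negv w" and uw: "hform u w = 0" and rw: "hform r w = 0"
    and r_pos: "0 < Re (hform r r)"
  shows "(cmod (hform u r))\<^sup>2 \<le> Re (hform u u) * Re (hform r r)"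
proof -
  define c where "c = Re (hform r r)"
  define a where "a = hform u r"
  define v where "v = vsub (vscale (of_real c) u) (vscale a r)"
  have "hform v w = 0" unfolding v_def hform_lin uw rw by simp
  then have v_nonneg: "0 \<le> Re (hform v v)" by (rule hform_nonneg_orthogonal_negative[OF neg])
  have "hform r u = cnj a" unfolding a_def by (rule hform_cnj)
  then have vv: "hform v v = of_real c * of_real c * hform u u - of_real c * (a * cnj a)"
    unfolding v_def hform_lin a_def[symmetric] c_def
    by (subst (2) hform_self_real) (simp add: algebra_simps)
  have "Re (hform v v) = c * (c * Re (hform u u) - (cmod a)\<^sup>2)"
    unfolding vv cmod_power2 by (simp add: power2_eq_square algebra_simps)
  with v_nonneg have "0 \<le> c * Re (hform u u) - (cmod a)\<^sup>2"
    using r_pos c_def by (simp add: zero_le_mult_iff)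
  then show ?thesis unfolding a_def c_def by (simp add: mult.commute)
qed

text \<open>For negative \<open>p\<close> this says
  \<open>cosh\<^sup>2 (d(w,p)/2) \<ge> 1 + |\<langle>p,r\<rangle>|\<^sup>2 / (|p\<^sup>2| r\<^sup>2)\<close> for every point \<open>w\<close> of \<open>r\<^sup>\<perp>\<close>.\<close>

lemma mirror_hform_bound:
  assumes neg: "negv w" and wr: "hform w r = 0" and r_pos: "0 < Re (hform r r)"
  shows "Re (hform w w) * (Re (hform r r) * Re (hform p p) - (cmod (hform p r))\<^sup>2)
           \<le> Re (hform r r) * (cmod (hform p w))\<^sup>2"
proof -
  define N where "N = Re (hform w w)"
  define P where "P = hform p w"
  define q where "q = vsub (vscale (of_real N) p) (vscale P w)"
  have N_neg: "N < 0" using neg by (simp add: N_def negv_def)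
  have ww: "hform w w = of_real N" unfolding N_def by (rule hform_self_real)
  have wp: "hform w p = cnj P" unfolding P_def by (rule hform_cnj)
  have rw: "hform r w = 0" using hform_cnj[of r w] wr by simp
  have "hform q w = 0" unfolding q_def hform_lin ww P_def by simp
  note cs = hform_cauchy_schwarz_orthogonal_negative[OF neg this rw r_pos]
  have qr: "hform q r = of_real N * hform p r" unfolding q_def hform_lin wr by simp
  have qq: "hform q q = of_real N * (of_real N * hform p p - P * cnj P)"
    unfolding q_def hform_lin ww wp P_def[symmetric] by (simp add: algebra_simps)
  have "Re (hform q q) = N * (N * Re (hform p p) - (cmod P)\<^sup>2)"
    unfolding qq cmod_power2 by (simp add: power2_eq_square)
  with cs have "N * (N * (cmod (hform p r))\<^sup>2)
      \<le> N * ((N * Re (hform p p) - (cmod P)\<^sup>2) * Re (hform r r))"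
    unfolding qr by (simp add: norm_mult power_mult_distrib power2_eq_square algebra_simps)
  then have "(N * Re (hform p p) - (cmod P)\<^sup>2) * Re (hform r r) \<le> N * (cmod (hform p r))\<^sup>2"
    using N_neg by (simp add: mult_le_cancel_left)
  then show ?thesis unfolding N_def[symmetric] P_def[symmetric] by (simp add: algebra_simps)
qed

lemma two_arcosh_sqrt_less_iff:
  fixes x y :: real
  assumes "1 \<le> x" "1 \<le> y"
  shows "2 * arcosh (sqrt x) < 2 * arcosh (sqrt y) \<longleftrightarrow> x < y"
  using assms by simp

lemma E_lattice12_smult:
  assumes "E_lattice12 M" "a \<in> Eis" "x \<in> M"
  shows "a *s x \<in> M"
proof -
  obtain b :: "12 \<Rightarrow> cvec12" where M: "M = {(\<Sum>i\<in>UNIV. c i *s b i) | c. \<forall>i. c i \<in> Eis}"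
    using assms(1) unfolding E_lattice12_def by blast
  obtain c where c: "\<And>i. c i \<in> Eis" and x: "x = (\<Sum>i\<in>UNIV. c i *s b i)"
    using assms(3) unfolding M by auto
  have "a *s x = (\<Sum>i\<in>UNIV. (a * c i) *s b i)"
    unfolding x by (simp add: vec_eq_iff sum_distrib_left mult.assoc)
  moreover have "\<And>i. a * c i \<in> Eis" using assms(2) c by (rule Eis_mult)
  ultimately show ?thesis unfolding M by (auto intro!: exI[of _ "\<lambda>i. a * c i"])
qed

lemma E_lattice12_zero: "E_lattice12 M \<Longrightarrow> 0 \<in> M"
  unfolding E_lattice12_def by (force intro!: exI[of _ "\<lambda>_. 0"])

lemma hform_Lat_in_theta_Eis:
  assumes "complex_leech M" "u \<in> Lat M" "v \<in> Lat M"
  shows "hform u v \<in> {theta * e | e. e \<in> Eis}"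
proof -
  obtain x y z where u: "u = (x, y, z)" and "x \<in> M" "y \<in> Eis" "z \<in> Eis"
    using assms(2) unfolding Lat_def by auto
  obtain x' y' z' where v: "v = (x', y', z')" and "x' \<in> M" "y' \<in> Eis" "z' \<in> Eis"
    using assms(3) unfolding Lat_def by auto
  obtain e where e: "e \<in> Eis" "hf12 x x' = theta * e"
    using assms(1) \<open>x \<in> M\<close> \<open>x' \<in> M\<close> unfolding complex_leech_def by blast
  have "hform u v = theta * (e + - (y * cnj z') + z * cnj y')"
    unfolding u v by (simp add: e cnj_theta algebra_simps)
  moreover have "e + - (y * cnj z') + z * cnj y' \<in> Eis"
    using e \<open>y \<in> Eis\<close> \<open>z \<in> Eis\<close> \<open>y' \<in> Eis\<close> \<open>z' \<in> Eis\<close> by (intro Eis_add Eis_mult Eis_cnj Eis_minus)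
  ultimately show ?thesis by blast
qed

lemma root_orthogonal_if_mirror_near:
  assumes M: "complex_leech M" and p: "p \<in> Lat M" "hform p p = -3"
    and r: "r \<in> roots M" and w: "w \<in> mirror r"
    and near: "chdist w p < 2 * arcosh (sqrt (4/3))"
  shows "hform p r = 0"
proof (rule ccontr)
  assume "hform p r \<noteq> 0"
  moreover have "r \<in> Lat M" "hform r r = 3" using r unfolding roots_def by auto
  ultimately have R: "3 \<le> (cmod (hform p r))\<^sup>2"
    using theta_Eis_norm_ge_3 hform_Lat_in_theta_Eis[OF M p(1)] by blast
  have w_neg: "negv w" and wr: "hform w r = 0" using w unfolding mirror_def by auto
  define N where "N = Re (hform w w)"
  have N_neg: "N < 0" using w_neg by (simp add: N_def negv_def)
  have "N * (-9 - (cmod (hform p r))\<^sup>2) \<le> 3 * (cmod (hform p w))\<^sup>2"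
    using mirror_hform_bound[OF w_neg wr, of p] \<open>hform r r = 3\<close> p(2) by (simp add: N_def)
  moreover have "N * (cmod (hform p r))\<^sup>2 \<le> N * 3" using R N_neg by (simp add: mult_left_mono_neg)
  ultimately have "4/3 * (N * -3) \<le> (cmod (hform w p))\<^sup>2"
    by (simp add: hform_cnj[of w p] algebra_simps)
  then have "4/3 \<le> (cmod (hform w p))\<^sup>2 / (N * -3)"
    by (subst pos_le_divide_eq) (use N_neg in auto)
  moreover have "chdist w p = 2 * arcosh (sqrt ((cmod (hform w p))\<^sup>2 / (N * -3)))"
    unfolding chdist_def N_def p(2) by simp
  ultimately show False
    using near two_arcosh_sqrt_less_iff[of "(cmod (hform w p))\<^sup>2 / (N * -3)" "4/3"] by simp
qed

lemma chball_inter_Hall_eq_Hat: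
  assumes "complex_leech M" "p \<in> Lat M" "hform p p = -3"
  defines "U \<equiv> chball p (2 * arcosh (sqrt (4/3)))"
  shows "U \<inter> Hall M = U \<inter> Hat M p"
proof -
  have "p \<in> mirror r" if "w \<in> U" "r \<in> roots M" "w \<in> mirror r" for w r
    using root_orthogonal_if_mirror_near[OF assms(1-3) that(2,3)] that(1) assms(3)
    unfolding U_def chball_def mirror_def negv_def by simp
  then show ?thesis unfolding Hall_def Hat_def by blast
qed

definition leech_root_witness :: vec where
  "leech_root_witness = (0, -1, omega)"

lemma leech_root_witness: "E_lattice12 M \<Longrightarrow> leech_root M leech_root_witness"
proof -
  assume "E_lattice12 M"
  then have "leech_root_witness \<in> Lat M"
    unfolding Lat_def leech_root_witness_def by (simp add: E_lattice12_zero Eis_minus)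
  moreover have "hform leech_root_witness leech_root_witness = 3"
    and "(cmod (hform rho leech_root_witness))\<^sup>2 = 3"
    unfolding cmod_power2 leech_root_witness_def
    by (simp_all add: rho_def hf12_simps theta_eq omega_def complex_eq_iff power2_eq_square)
  ultimately show ?thesis unfolding leech_root_def roots_def by simp
qed

definition nearest_point :: "cvec12 \<Rightarrow> vec" where
  "nearest_point lam = (- lam, - theta, 2)"

definition common_point :: "cvec12 \<Rightarrow> vec" where
  "common_point lam = ((-3/4) *s lam, - theta, 3/2)"

text \<open>The \<open>_pre\<close> points are the images of their namesakes under the inverse triflection
  \<open>triflection (cnj omega) leech_root_witness\<close>.\<close>

definition common_point_pre :: "cvec12 \<Rightarrow> vec" where
  "common_point_pre lam = ((-3/4) *s lam, Complex (3/4) (-3 * sqrt 3/4), Complex (9/4) (- sqrt 3/4))"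

definition mirror_point :: "cvec12 \<Rightarrow> vec" where
  "mirror_point lam = ((-3/4) *s lam, - theta, 5/4)"

definition mirror_point_pre :: "cvec12 \<Rightarrow> vec" where
  "mirror_point_pre lam = ((-3/4) *s lam, Complex (5/8) (-5 * sqrt 3/8), Complex (17/8) (- sqrt 3/8))"

context
  fixes lam9 :: cvec12
  assumes lam9_norm: "hf12 lam9 lam9 = 9"
begin

lemmas coords = hf12_simps lam9_norm theta_eq omega_def complex_eq_iff rho_def power2_eq_square

lemma nearest_point_norm: "hform (nearest_point lam9) (nearest_point lam9) = -3"
  by (simp add: nearest_point_def coords algebra_simps)

lemma nearest_point_ht: "ht (nearest_point lam9) = 3"
  unfolding ht_def nearest_point_norm cmod_power2 by (simp add: nearest_point_def coords)

lemma chdist_nearest_point: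
  assumes "Re (hform u u) < 0"
  shows "chdist u (nearest_point lam9)
           = 2 * arcosh (sqrt ((cmod (hform u (nearest_point lam9)))\<^sup>2 / (3 * - Re (hform u u))))"
  unfolding chdist_def nearest_point_norm by (simp add: mult.commute)

lemma common_point_mem:
  defines "B \<equiv> {w. negv w \<and> ht w < 3}"
  shows "common_point lam9 \<in> B \<inter> triflection omega leech_root_witness ` B
           \<inter> chball (nearest_point lam9) (2 * arcosh (sqrt (4/3)))"
proof -
  have norm: "hform (common_point lam9) (common_point lam9) = -63/16"
    and rho: "(cmod (hform rho (common_point lam9)))\<^sup>2 = 9"
    and near: "(cmod (hform (common_point lam9) (nearest_point lam9)))\<^sup>2 = 225/16"
    unfolding cmod_power2 by (simp_all add: common_point_def nearest_point_def coords algebra_simps)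
  have pre_norm: "hform (common_point_pre lam9) (common_point_pre lam9) = -63/16"
    and pre_rho: "(cmod (hform rho (common_point_pre lam9)))\<^sup>2 = 27/4"
    and pre_image: "triflection omega leech_root_witness (common_point_pre lam9) = common_point lam9"
    unfolding cmod_power2 by (simp_all add: common_point_pre_def common_point_def leech_root_witness_def
        triflection_def coords algebra_simps)
  have "common_point lam9 \<in> B" using norm rho by (simp add: B_def negv_def ht_def)
  moreover have "common_point_pre lam9 \<in> B" using pre_norm pre_rho by (simp add: B_def negv_def ht_def)
  then have "common_point lam9 \<in> triflection omega leech_root_witness ` B"
    using pre_image by (metis image_eqI)
  moreover have "chdist (common_point lam9) (nearest_point lam9) < 2 * arcosh (sqrt (4/3))"
    using norm near by (simp add: chdist_nearest_point two_arcosh_sqrt_less_iff)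
  ultimately show ?thesis using norm by (simp add: chball_def negv_def)
qed

lemma mirror_point_mem:
  defines "B \<equiv> {w. negv w \<and> ht w < 3}"
  shows "mirror_point lam9 \<in> triflection omega leech_root_witness ` B
           \<inter> chball (nearest_point lam9) (2 * arcosh (sqrt (4/3))) \<inter> mirror (lam9, theta, -1)"
proof -
  have norm: "hform (mirror_point lam9) (mirror_point lam9) = -39/16"
    and orth: "hform (mirror_point lam9) (lam9, theta, -1) = 0"
    and near: "(cmod (hform (mirror_point lam9) (nearest_point lam9)))\<^sup>2 = 9"
    unfolding cmod_power2 by (simp_all add: mirror_point_def nearest_point_def coords algebra_simps)
  have pre_norm: "hform (mirror_point_pre lam9) (mirror_point_pre lam9) = -39/16"
    and pre_rho: "(cmod (hform rho (mirror_point_pre lam9)))\<^sup>2 = 75/16"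
    and pre_image: "triflection omega leech_root_witness (mirror_point_pre lam9) = mirror_point lam9"
    unfolding cmod_power2 by (simp_all add: mirror_point_pre_def mirror_point_def leech_root_witness_def
        triflection_def coords algebra_simps)
  have "mirror_point_pre lam9 \<in> B" using pre_norm pre_rho by (simp add: B_def negv_def ht_def)
  then have "mirror_point lam9 \<in> triflection omega leech_root_witness ` B"
    using pre_image by (metis image_eqI)
  moreover have "chdist (mirror_point lam9) (nearest_point lam9) < 2 * arcosh (sqrt (4/3))"
    using norm near by (simp add: chdist_nearest_point two_arcosh_sqrt_less_iff)
  ultimately show ?thesis using norm orth by (simp add: chball_def mirror_def negv_def)
qed

end

theorem lemma5p4:
  fixes \<Lambda> :: "cvec12 set" and lam9 :: cvec12
  assumes "complex_leech \<Lambda>"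
    and "lam9 \<in> \<Lambda>" and "hf12 lam9 lam9 = 9"
  defines "s \<equiv> (lam9, theta, -1) :: vec"
  defines "p \<equiv> vsub rho (vscale (hform rho s / 3) s)"
  defines "B \<equiv> {w. negv w \<and> ht w < ht p}"
  shows "\<exists>r>0. chball p r \<inter> Hall \<Lambda> = chball p r \<inter> Hat \<Lambda> p \<and>
           (\<exists>l \<zeta>. leech_root \<Lambda> l \<and> \<zeta> \<in> {omega, cnj omega} \<and>
              B \<inter> triflection \<zeta> l ` B \<inter> chball p r \<noteq> {} \<and>
              triflection \<zeta> l ` B \<inter> chball p r \<inter> mirror s \<noteq> {})"
proof -
  have lattice: "E_lattice12 \<Lambda>" using assms(1) by (simp add: complex_leech_def)
  have "hform rho s = 3" by (simp add: s_def rho_def hf12_simps theta_mult_cnj)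
  then have p: "p = nearest_point lam9" by (simp add: p_def s_def rho_def nearest_point_def)
  have p_norm: "hform p p = -3" unfolding p by (rule nearest_point_norm[OF assms(3)])
  have "- lam9 \<in> \<Lambda>" using E_lattice12_smult[OF lattice Eis_minus[OF Eis_1] assms(2)] by simp
  then have "p \<in> Lat \<Lambda>" unfolding p nearest_point_def Lat_def by (auto intro: Eis_minus)
  have B: "B = {w. negv w \<and> ht w < 3}" unfolding B_def p nearest_point_ht[OF assms(3)] ..
  show ?thesis
    using leech_root_witness[OF lattice] chball_inter_Hall_eq_Hat[OF assms(1) \<open>p \<in> Lat \<Lambda>\<close> p_norm]
      common_point_mem[OF assms(3)] mirror_point_mem[OF assms(3)]
    unfolding B p s_def
    by (intro exI[of _ "2 * arcosh (sqrt (4/3))"] conjI exI[of _ leech_root_witness] exI[of _ omega])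
       (auto simp: two_arcosh_sqrt_less_iff)
qed

end
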